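(* For every positive integer $k$, $$\sum_{r=1}^{2k} r!\,{2k\brace r}=\sum_{p=1}^{k}\sum_{q=1}^{k}{k\brace p}{k\brace q}\,p!\,q!\,D(p,q).$$
   Context: ${k\brace r}$ denotes the Stirling number of the second kind (number of partitions of a $k$-element set into $r$ nonempty blocks). $D(m,n)$ is the Delannoy number, defined for nonnegative integers $m,n$ by $D(m,n)=1$ if $mn=0$, and $D(m,n)=D(m-1,n)+D(m-1,n-1)+D(m,n-1)$ if $mn\neq0$. *)

theory Defs
  imports "HOL-Combinatorics.Stirling"
begin

fun Delannoy :: "nat \<Rightarrow> nat \<Rightarrow> nat" where
  "Delannoy 0 n = 1"
| "Delannoy (Suc m) 0 = 1"
| "Delannoy (Suc m) (Suc n) =
     Delannoy m (Suc n) + Delannoy m n + Delannoy (Suc m) n"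

end

theory Submission
  imports Defs
begin

text \<open>
  Put \<open>B w m n = \<Sum>p q. S(m,p) S(n,q) w(p,q)\<close>. The recurrence
  \<open>S(m+1,p) = p S(m,p) + S(m,p-1)\<close> applied in either argument shows that
  \<open>B w (m+1) n = B w m (n+1)\<close> whenever the weight satisfies
  \<open>p w(p,q) + w(p+1,q) = q w(p,q) + w(p,q+1)\<close>, so then \<open>B w (2k) 0 = B w k k\<close>.
  The weight \<open>w(p,q) = p! q! D(p,q)\<close> qualifies by the Delannoy identity
  \<open>p D(p,q) + (p+1) D(p+1,q) = q D(p,q) + (q+1) D(p,q+1)\<close>, and since
  \<open>D(p,0) = 1\<close> the sum \<open>B w (2k) 0\<close> is the left-hand side of the theorem.
\<close>

lemma Delannoy_0_right [simp]: "Delannoy m 0 = 1"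
  by (cases m) simp_all

lemma Delannoy_1_left: "Delannoy (Suc 0) n = 2 * n + 1"
  by (induction n) simp_all

lemma Delannoy_1_right: "Delannoy m (Suc 0) = 2 * m + 1"
  by (induction m) simp_all

lemma Delannoy_shift:
  "m * Delannoy m n + Suc m * Delannoy (Suc m) n = n * Delannoy m n + Suc n * Delannoy m (Suc n)"
proof (induction m arbitrary: n)
  case 0
  show ?case by (simp add: Delannoy_1_left)
next
  case (Suc m)
  note IH_m = Suc.IH
  show ?case
  proof (induction n)
    case 0
    show ?case by (simp add: Delannoy_1_right)
  next
    case (Suc n)
    show ?case using Suc.IH IH_m[of n] IH_m[of "Suc n"] by (simp add: algebra_simps)
  qed
qed

lemma sum_Stirling_Suc:
  fixes f :: "nat \<Rightarrow> 'a::comm_semiring_1"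
  shows "(\<Sum>k\<le>Suc n. of_nat (Stirling (Suc n) k) * f k) =
         (\<Sum>k\<le>n. of_nat (Stirling n k) * (of_nat k * f k + f (Suc k)))"
proof -
  have "(\<Sum>k\<le>Suc n. of_nat (Stirling (Suc n) k) * f k) =
        (\<Sum>k\<le>n. of_nat (Stirling (Suc n) (Suc k)) * f (Suc k))"
    by (subst sum.atMost_Suc_shift) simp
  also have "\<dots> = (\<Sum>k\<le>n. of_nat (Suc k * Stirling n (Suc k)) * f (Suc k)) +
                  (\<Sum>k\<le>n. of_nat (Stirling n k) * f (Suc k))"
    by (simp add: sum.distrib distrib_right)
  also have "(\<Sum>k\<le>n. of_nat (Suc k * Stirling n (Suc k)) * f (Suc k)) =
             (\<Sum>k\<le>Suc n. of_nat (k * Stirling n k) * f k)"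
    by (subst sum.atMost_Suc_shift) simp
  also have "\<dots> = (\<Sum>k\<le>n. of_nat (k * Stirling n k) * f k)"
    by simp
  finally show ?thesis
    by (simp add: sum.distrib algebra_simps)
qed

definition Stirling_bisum :: "(nat \<Rightarrow> nat \<Rightarrow> 'a::comm_semiring_1) \<Rightarrow> nat \<Rightarrow> nat \<Rightarrow> 'a" where
  "Stirling_bisum w m n =
     (\<Sum>p\<le>m. \<Sum>q\<le>n. of_nat (Stirling m p) * of_nat (Stirling n q) * w p q)"

lemma Stirling_bisum_Suc_swap:
  assumes shift: "\<And>p q. of_nat p * w p q + w (Suc p) q = of_nat q * w p q + w p (Suc q)"
  shows "Stirling_bisum w (Suc m) n = Stirling_bisum w m (Suc n)"
proof -
  have "Stirling_bisum w (Suc m) n =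
        (\<Sum>p\<le>Suc m. of_nat (Stirling (Suc m) p) * (\<Sum>q\<le>n. of_nat (Stirling n q) * w p q))"
    by (simp add: Stirling_bisum_def sum_distrib_left mult.assoc)
  also have "\<dots> = (\<Sum>p\<le>m. of_nat (Stirling m p) *
                     (of_nat p * (\<Sum>q\<le>n. of_nat (Stirling n q) * w p q) +
                      (\<Sum>q\<le>n. of_nat (Stirling n q) * w (Suc p) q)))"
    by (rule sum_Stirling_Suc)
  also have "\<dots> = (\<Sum>p\<le>m. \<Sum>q\<le>n. of_nat (Stirling m p) * of_nat (Stirling n q) *
                     (of_nat p * w p q + w (Suc p) q))"
    by (simp add: sum_distrib_left sum.distrib algebra_simps)
  also have "\<dots> = (\<Sum>q\<le>n. \<Sum>p\<le>m. of_nat (Stirling m p) * of_nat (Stirling n q) *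
                     (of_nat q * w p q + w p (Suc q)))"
    by (simp add: shift sum.swap[of _ "{..m}"])
  also have "\<dots> = (\<Sum>q\<le>n. of_nat (Stirling n q) *
                     (of_nat q * (\<Sum>p\<le>m. of_nat (Stirling m p) * w p q) +
                      (\<Sum>p\<le>m. of_nat (Stirling m p) * w p (Suc q))))"
    by (simp add: sum_distrib_left sum.distrib algebra_simps)
  also have "\<dots> = (\<Sum>q\<le>Suc n. of_nat (Stirling (Suc n) q) * (\<Sum>p\<le>m. of_nat (Stirling m p) * w p q))"
    by (rule sum_Stirling_Suc[symmetric])
  also have "\<dots> = Stirling_bisum w m (Suc n)"
    by (simp add: Stirling_bisum_def sum.swap[of _ "{..m}"] sum_distrib_left algebra_simps)
  finally show ?thesis .
qed

lemma Stirling_bisum_transfer: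
  assumes "\<And>p q. of_nat p * w p q + w (Suc p) q = of_nat q * w p q + w p (Suc q)"
  shows "Stirling_bisum w (m + n) 0 = Stirling_bisum w m n"
proof (induction n arbitrary: m)
  case (Suc n)
  have "Stirling_bisum w (m + Suc n) 0 = Stirling_bisum w (Suc m) n"
    using Suc.IH[of "Suc m"] by simp
  also have "\<dots> = Stirling_bisum w m (Suc n)"
    using assms by (rule Stirling_bisum_Suc_swap)
  finally show ?case .
qed simp

definition Delannoy_weight :: "nat \<Rightarrow> nat \<Rightarrow> nat" where
  "Delannoy_weight p q = fact p * fact q * Delannoy p q"

lemma Delannoy_weight_shift:
  "p * Delannoy_weight p q + Delannoy_weight (Suc p) q = q * Delannoy_weight p q + Delannoy_weight p (Suc q)"
proof -
  have "p * Delannoy_weight p q + Delannoy_weight (Suc p) q =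
        fact p * fact q * (p * Delannoy p q + Suc p * Delannoy (Suc p) q)"
    by (simp add: Delannoy_weight_def algebra_simps)
  also have "\<dots> = fact p * fact q * (q * Delannoy p q + Suc q * Delannoy p (Suc q))"
    by (simp only: Delannoy_shift)
  also have "\<dots> = q * Delannoy_weight p q + Delannoy_weight p (Suc q)"
    by (simp add: Delannoy_weight_def algebra_simps)
  finally show ?thesis .
qed

theorem corollary1:
  fixes k :: nat
  assumes "k \<ge> 1"
  shows "(\<Sum>r=1..2*k. fact r * Stirling (2*k) r) =
         (\<Sum>p=1..k. \<Sum>q=1..k. Stirling k p * Stirling k q * fact p * fact q * Delannoy p q)"
proof -
  have Stirling_0: "Stirling k 0 = 0" "Stirling (2*k) 0 = 0"
    using assms by (cases k; simp)+
  have "(\<Sum>r=1..2*k. fact r * Stirling (2*k) r) = Stirling_bisum Delannoy_weight (2*k) 0"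
    using Stirling_0
    by (simp add: Stirling_bisum_def Delannoy_weight_def atMost_atLeast0 sum.atLeast_Suc_atMost mult.commute)
  also have "\<dots> = Stirling_bisum Delannoy_weight k k"
    using Stirling_bisum_transfer[of Delannoy_weight k k] by (simp add: Delannoy_weight_shift mult_2)
  also have "\<dots> = (\<Sum>p=1..k. \<Sum>q=1..k. Stirling k p * Stirling k q * fact p * fact q * Delannoy p q)"
    using Stirling_0
    by (simp add: Stirling_bisum_def Delannoy_weight_def atMost_atLeast0 sum.atLeast_Suc_atMost mult.assoc)
  finally show ?thesis .
qed

end
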